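(* (a) If $X\sim\mathrm{Poisson}(\lambda)$ and $Y\sim\mathrm{Poisson}(\mu)$ with $\lambda,\mu>0$, then $X\le_{wd}Y$ if and only if $\lambda\le\mu$. (b) If $X\sim\mathrm{Bin}(m,p)$ and $Y\sim\mathrm{Bin}(n,p)$ with $p\in(0,1)$, then $X\le_{wd}Y$ if and only if $m\le n$. (c) If $X\sim\mathrm{NB}(r,p)$ and $Y\sim\mathrm{NB}(s,p)$, then $X\le_{wd}Y$ if and only if $r\le s$.
   Context: For a real random variable $X$, its Lévy concentration function is $Q_X(\varepsilon)=\sup_{x_0\in\mathbb{R}}\Pr\{X\in[x_0,x_0+\varepsilon]\}$, $\varepsilon>0$. For random variables $X,Y$, write $X\le_{wd}Y$ if $Q_X(\varepsilon)\ge Q_Y(\varepsilon)$ for all $\varepsilon>0$. $\mathrm{NB}(r,p)$ denotes the negative binomial distribution with size parameter $r>0$ and success probability $p\in(0,1)$ (so that $\mathrm{NB}(r,p)*\mathrm{NB}(s,p)=\mathrm{NB}(r+s,p)$). *)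

theory Defs
  imports "HOL-Probability.Probability"
begin

definition levy_conc :: "real measure \<Rightarrow> real \<Rightarrow> real" where
  "levy_conc M \<epsilon> = (SUP x0\<in>(UNIV::real set). measure M {x0..x0 + \<epsilon>})"

definition wd_le :: "real measure \<Rightarrow> real measure \<Rightarrow> bool" where
  "wd_le M N \<longleftrightarrow> (\<forall>\<epsilon>>0. levy_conc M \<epsilon> \<ge> levy_conc N \<epsilon>)"

definition real_law :: "nat pmf \<Rightarrow> real measure" where
  "real_law X = measure_pmf (map_pmf real X)"

text \<open>Negative binomial NB(r,p): number of failures before the r-th success,
  P(k) = ((r+k-1) gchoose k) p^r (1-p)^k.\<close>
definition neg_binomial_pmf :: "real \<Rightarrow> real \<Rightarrow> nat pmf" where
  "neg_binomial_pmf r p =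
     embed_pmf (\<lambda>k. ((r + real k - 1) gchoose k) * p powr r * (1 - p) ^ k)"

end

theory Submission
  imports Defs "HOL-Computational_Algebra.Formal_Power_Series" "HOL-Analysis.Generalised_Binomial_Theorem"
begin

text \<open>Adding an independent nat-valued variable only spreads mass: every window of the sum is
  an average of shifted windows of the summand, so the concentration function cannot increase.
  For windows shorter than 1 the concentration function is the largest atom, and it strictly
  decreases when the added variable charges every integer. Poisson and negative binomial laws
  form convolution semigroups in their parameter with full support, which gives (a) and (c).
  Binomial laws form a semigroup in the number of trials as well, but have bounded support: for
  n < m, Bin(n,p) is carried by a window of length n + 1/2 while Bin(m,p) has atoms at 0 and m,
  so the converse in (b) follows by comparing the concentration functions at n + 1/2.\<close>

definition conv_pmf :: "nat pmf \<Rightarrow> nat pmf \<Rightarrow> nat pmf" where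
  "conv_pmf X Y = map_pmf (\<lambda>(x, y). x + y) (pair_pmf X Y)"

lemma conv_pmf_altdef: "conv_pmf X Y = bind_pmf Y (\<lambda>y. map_pmf (\<lambda>x. x + y) X)"
  unfolding conv_pmf_def
  by (subst pair_commute_pmf) (simp add: pair_pmf_def map_pmf_def bind_assoc_pmf bind_return_pmf)

lemma pmf_conv_pmf: "pmf (conv_pmf X Y) k = (\<Sum>j\<le>k. pmf Y j * pmf X (k - j))"
proof -
  have shift: "pmf (map_pmf (\<lambda>x. x + j) X) k = (if j \<le> k then pmf X (k - j) else 0)" for j
  proof -
    have "(\<lambda>x. x + j) -` {k} = (if j \<le> k then {k - j} else {})" by auto
    then show ?thesis by (simp add: pmf_map measure_pmf_single)
  qed
  have "pmf (conv_pmf X Y) k = (\<integral>j. (if j \<le> k then pmf X (k - j) else 0) \<partial>measure_pmf Y)"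
    unfolding conv_pmf_altdef pmf_bind shift ..
  also have "\<dots> = (\<Sum>j\<le>k. (if j \<le> k then pmf X (k - j) else 0) * pmf Y j)"
    by (rule integral_measure_pmf_real) (auto split: if_splits)
  finally show ?thesis by (simp add: mult.commute)
qed

lemma finite_pmf_ge:
  assumes "0 < t"
  shows "finite {x. t \<le> pmf X x}"
proof (rule ccontr)
  let ?T = "{x. t \<le> pmf X x}"
  assume "infinite ?T"
  then obtain F where F: "F \<subseteq> ?T" "finite F" "card F = nat \<lceil>1 / t\<rceil> + 1"
    by (meson infinite_arbitrarily_large)
  have "real (card F) * t \<le> (\<Sum>x\<in>F. pmf X x)"
    using F(1) sum_mono[of F "\<lambda>_. t" "pmf X"] by auto
  also have "\<dots> = measure_pmf.prob X F" using F(2) by (simp add: measure_measure_pmf_finite)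
  also have "\<dots> \<le> 1" by simp
  finally have "real (card F) * t \<le> 1" .
  moreover have "1 / t < real (card F)" using F(3) by linarith
  ultimately show False using assms by (simp add: field_simps)
qed

lemma pmf_attains_max:
  obtains x0 where "\<And>x. pmf X x \<le> pmf X x0"
proof -
  obtain a where "a \<in> set_pmf X" using set_pmf_not_empty by fast
  then have "0 < pmf X a" by (simp add: pmf_positive)
  define T where "T = {x. pmf X a \<le> pmf X x}"
  have "finite T" unfolding T_def using \<open>0 < pmf X a\<close> by (rule finite_pmf_ge)
  moreover have "a \<in> T" by (simp add: T_def)
  ultimately obtain x0 where "x0 \<in> T" "Max (pmf X ` T) = pmf X x0"
    by (metis obtains_MAX empty_iff)
  show thesis
  proof (rule that)
    fix x
    show "pmf X x \<le> pmf X x0"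
    proof (cases "x \<in> T")
      case True
      then show ?thesis
        using \<open>finite T\<close> \<open>Max (pmf X ` T) = pmf X x0\<close> by (metis Max_ge finite_imageI imageI)
    next
      case False
      then show ?thesis using \<open>x0 \<in> T\<close> by (simp add: T_def)
    qed
  qed
qed

lemma measure_le_levy_conc: "measure (real_law X) {x0..x0 + e} \<le> levy_conc (real_law X) e"
  unfolding levy_conc_def
  by (rule cSUP_upper) (auto intro!: bdd_aboveI[where M=1] simp: real_law_def)

lemma levy_conc_le:
  assumes "\<And>x0. measure (real_law X) {x0..x0 + e} \<le> c"
  shows "levy_conc (real_law X) e \<le> c"
  unfolding levy_conc_def by (rule cSUP_least) (use assms in auto)

lemma pmf_le_levy_conc:
  assumes "0 \<le> e"
  shows "pmf X k \<le> levy_conc (real_law X) e"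
proof -
  have "pmf X k = measure_pmf.prob X {k}" by (simp add: measure_pmf_single)
  also have "\<dots> \<le> measure_pmf.prob X (real -` {real k..real k + e})"
    by (rule measure_pmf.finite_measure_mono) (use assms in auto)
  also have "\<dots> = measure (real_law X) {real k..real k + e}" by (simp add: real_law_def)
  also have "\<dots> \<le> levy_conc (real_law X) e" by (rule measure_le_levy_conc)
  finally show ?thesis .
qed

lemma levy_conc_le_of_pmf_le:
  assumes "e < 1" and pmf_le: "\<And>k. pmf X k \<le> c"
  shows "levy_conc (real_law X) e \<le> c"
proof (rule levy_conc_le)
  fix x0
  let ?W = "real -` {x0..x0 + e} :: nat set"
  show "measure (real_law X) {x0..x0 + e} \<le> c"
  proof (cases "?W = {}")
    case True
    have "0 \<le> c" using pmf_le[of 0] pmf_nonneg[of X 0] by linarith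
    with True show ?thesis by (simp add: real_law_def)
  next
    case False
    then obtain k where k: "k \<in> ?W" by blast
    have "?W \<subseteq> {k}"
    proof
      fix j assume "j \<in> ?W"
      with k \<open>e < 1\<close> have "\<bar>real j - real k\<bar> < 1" by auto
      then show "j \<in> {k}" by auto
    qed
    then have "measure_pmf.prob X ?W \<le> measure_pmf.prob X {k}"
      by (rule measure_pmf.finite_measure_mono) simp
    then show ?thesis using pmf_le[of k] by (simp add: real_law_def measure_pmf_single)
  qed
qed

lemma levy_conc_conv_pmf_le: "levy_conc (real_law (conv_pmf X Y)) e \<le> levy_conc (real_law X) e"
proof (rule levy_conc_le)
  fix x0
  let ?Q = "levy_conc (real_law X) e"
  have shifted_window: "measure_pmf.prob (map_pmf (\<lambda>x. x + y) X) (real -` {x0..x0 + e}) \<le> ?Q" for y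
  proof -
    have "measure_pmf.prob (map_pmf (\<lambda>x. x + y) X) (real -` {x0..x0 + e})
        = measure (real_law X) {x0 - real y..x0 - real y + e}"
      by (simp add: real_law_def vimage_def algebra_simps)
    then show ?thesis using measure_le_levy_conc by metis
  qed
  have "0 \<le> ?Q" using measure_le_levy_conc[of X 0 e] measure_nonneg order.trans by blast
  have "emeasure (real_law (conv_pmf X Y)) {x0..x0 + e}
      = (\<integral>\<^sup>+y. emeasure (map_pmf (\<lambda>x. x + y) X) (real -` {x0..x0 + e}) \<partial>measure_pmf Y)"
    by (simp add: real_law_def conv_pmf_altdef)
  also have "\<dots> \<le> (\<integral>\<^sup>+y. ennreal ?Q \<partial>measure_pmf Y)"
    using shifted_window
    by (intro nn_integral_mono) (simp add: measure_pmf.emeasure_eq_measure ennreal_leI)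
  also have "\<dots> = ennreal ?Q" by simp
  finally show "measure (real_law (conv_pmf X Y)) {x0..x0 + e} \<le> ?Q"
    using \<open>0 \<le> ?Q\<close> by (simp add: real_law_def measure_pmf.emeasure_eq_measure)
qed

text \<open>A window shorter than 1 contains at most one integer, so the concentration function is the
  largest atom; the largest atom of the convolution, at k0, is at most P(Y \<le> k0) < 1 times the
  largest atom of X.\<close>
lemma levy_conc_conv_pmf_less:
  assumes "0 \<le> e" "e < 1" and full_support: "\<And>j. 0 < pmf Y j"
  shows "levy_conc (real_law (conv_pmf X Y)) e < levy_conc (real_law X) e"
proof -
  obtain k0 where k0: "\<And>k. pmf (conv_pmf X Y) k \<le> pmf (conv_pmf X Y) k0"
    using pmf_attains_max by metis
  obtain k1 where k1: "\<And>k. pmf X k \<le> pmf X k1"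
    using pmf_attains_max by metis
  obtain a where "a \<in> set_pmf X" using set_pmf_not_empty by fast
  then have "0 < pmf X k1" using k1[of a] pmf_positive order.strict_trans2 by metis
  have "(\<Sum>j\<le>k0. pmf Y j) < (\<Sum>j\<le>Suc k0. pmf Y j)" using full_support[of "Suc k0"] by simp
  also have "\<dots> = measure_pmf.prob Y {..Suc k0}" by (simp add: measure_measure_pmf_finite)
  also have "\<dots> \<le> 1" by simp
  finally have Y_mass: "(\<Sum>j\<le>k0. pmf Y j) < 1" .
  have "levy_conc (real_law (conv_pmf X Y)) e \<le> pmf (conv_pmf X Y) k0"
    using \<open>e < 1\<close> k0 by (rule levy_conc_le_of_pmf_le)
  also have "\<dots> = (\<Sum>j\<le>k0. pmf Y j * pmf X (k0 - j))" by (rule pmf_conv_pmf)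
  also have "\<dots> \<le> (\<Sum>j\<le>k0. pmf Y j) * pmf X k1"
    unfolding sum_distrib_right by (intro sum_mono mult_left_mono k1) simp
  also have "\<dots> < pmf X k1" using Y_mass \<open>0 < pmf X k1\<close> by simp
  also have "\<dots> \<le> levy_conc (real_law X) e" using \<open>0 \<le> e\<close> by (rule pmf_le_levy_conc)
  finally show ?thesis .
qed

lemma wd_le_conv_pmf: "wd_le (real_law X) (real_law (conv_pmf X Y))"
  unfolding wd_le_def using levy_conc_conv_pmf_le by blast

lemma not_wd_le_conv_pmf:
  assumes "\<And>j. 0 < pmf Y j"
  shows "\<not> wd_le (real_law (conv_pmf X Y)) (real_law X)"
  unfolding wd_le_def not_all
  using levy_conc_conv_pmf_less[of "1/2" Y X] assms by (intro exI[of _ "1/2"]) auto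

lemma wd_le_iff_of_conv_semigroup:
  fixes F :: "real \<Rightarrow> nat pmf"
  assumes conv: "\<And>a b. 0 < a \<Longrightarrow> 0 < b \<Longrightarrow> conv_pmf (F a) (F b) = F (a + b)"
    and full_support: "\<And>a j. 0 < a \<Longrightarrow> 0 < pmf (F a) j"
    and "0 < a" "0 < b"
  shows "wd_le (real_law (F a)) (real_law (F b)) \<longleftrightarrow> a \<le> b"
proof
  assume wd: "wd_le (real_law (F a)) (real_law (F b))"
  show "a \<le> b"
  proof (rule ccontr)
    assume "\<not> a \<le> b"
    then have "F a = conv_pmf (F b) (F (a - b))" using conv[of b "a - b"] \<open>0 < b\<close> by simp
    then show False
      using wd not_wd_le_conv_pmf[of "F (a - b)" "F b"] full_support \<open>\<not> a \<le> b\<close> by simp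
  qed
next
  assume "a \<le> b"
  then consider "a = b" | "a < b" by linarith
  then show "wd_le (real_law (F a)) (real_law (F b))"
  proof cases
    case 1
    then show ?thesis by (simp add: wd_le_def)
  next
    case 2
    then have "F b = conv_pmf (F a) (F (b - a))" using conv[of a "b - a"] \<open>0 < a\<close> by simp
    then show ?thesis using wd_le_conv_pmf by metis
  qed
qed

lemma one_le_levy_conc:
  assumes "set_pmf X \<subseteq> {a..b}" "real b - real a \<le> e"
  shows "1 \<le> levy_conc (real_law X) e"
proof -
  have "set_pmf X \<subseteq> real -` {real a..real a + e}" using assms by auto
  then have "measure (real_law X) {real a..real a + e} = 1"
    by (simp add: real_law_def measure_pmf.prob_eq_1 AE_measure_pmf_iff subset_eq)
  then show ?thesis using measure_le_levy_conc by metis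
qed

lemma levy_conc_less_one:
  assumes "i \<in> set_pmf X" "j \<in> set_pmf X" "e < real j - real i"
  shows "levy_conc (real_law X) e < 1"
proof -
  define c where "c = 1 - min (pmf X i) (pmf X j)"
  have "levy_conc (real_law X) e \<le> c"
  proof (rule levy_conc_le)
    fix x0
    let ?W = "real -` {x0..x0 + e} :: nat set"
    have "\<not> (i \<in> ?W \<and> j \<in> ?W)" using assms(3) by auto
    then obtain a where a: "a \<in> {i, j}" "a \<notin> ?W" by blast
    have "measure_pmf.prob X ?W \<le> measure_pmf.prob X (UNIV - {a})"
      using a by (intro measure_pmf.finite_measure_mono) auto
    also have "\<dots> = 1 - pmf X a"
      using measure_pmf.prob_compl[of "{a}" X] by (simp add: measure_pmf_single)
    also have "\<dots> \<le> c" using a by (auto simp: c_def)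
    finally show "measure (real_law X) {x0..x0 + e} \<le> c" by (simp add: real_law_def)
  qed
  moreover have "c < 1" using assms(1,2) by (simp add: c_def pmf_positive)
  ultimately show ?thesis by simp
qed

lemma conv_pmf_poisson:
  assumes "0 < a" "0 < b"
  shows "conv_pmf (poisson_pmf a) (poisson_pmf b) = poisson_pmf (a + b)"
proof (rule pmf_eqI)
  fix k
  have "pmf (conv_pmf (poisson_pmf a) (poisson_pmf b)) k
      = (\<Sum>j\<le>k. (b ^ j / fact j * exp (- b)) * (a ^ (k - j) / fact (k - j) * exp (- a)))"
    using assms by (simp add: pmf_conv_pmf)
  also have "\<dots> = (\<Sum>j\<le>k. real (k choose j) * b ^ j * a ^ (k - j)) / fact k * exp (- (a + b))"
    unfolding sum_divide_distrib sum_distrib_right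
    by (intro sum.cong refl) (simp add: binomial_fact exp_add[symmetric] field_simps)
  also have "\<dots> = (b + a) ^ k / fact k * exp (- (a + b))"
    by (simp add: binomial_ring)
  also have "\<dots> = pmf (poisson_pmf (a + b)) k" using assms by (simp add: add.commute)
  finally show "pmf (conv_pmf (poisson_pmf a) (poisson_pmf b)) k = pmf (poisson_pmf (a + b)) k" .
qed

lemma neg_binomial_coeff_eq:
  "((r + real k - 1) gchoose k) * (1 - p) ^ k = ((- r) gchoose k) * (p - 1) ^ k"
proof -
  have "(p - 1) ^ k = (- 1) ^ k * (1 - p) ^ k" by (simp flip: power_mult_distrib)
  then show ?thesis by (simp add: gbinomial_minus)
qed

lemma neg_binomial_coeff_pos:
  assumes "0 < r"
  shows "0 < (r + real k - 1) gchoose k"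
proof -
  have "(r + real k - 1) gchoose k = pochhammer r k / fact k"
    by (simp add: gbinomial_pochhammer')
  then show ?thesis using assms by (simp add: pochhammer_pos)
qed

lemma neg_binomial_sums:
  assumes "0 < p" "p < 1"
  shows "(\<lambda>k. ((r + real k - 1) gchoose k) * p powr r * (1 - p) ^ k) sums 1"
proof -
  have "(\<lambda>k. ((- r) gchoose k) * (p - 1) ^ k) sums (1 + (p - 1)) powr (- r)"
    using assms by (intro gen_binomial_real) simp
  then have "(\<lambda>k. p powr r * (((r + real k - 1) gchoose k) * (1 - p) ^ k))
      sums (p powr r * p powr (- r))"
    by (intro sums_mult) (simp add: neg_binomial_coeff_eq)
  moreover have "p powr r * p powr (- r) = 1" using assms by (simp flip: powr_add)
  ultimately show ?thesis by (simp add: mult_ac)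
qed

lemma pmf_neg_binomial_pmf:
  assumes "0 < r" "0 < p" "p < 1"
  shows "pmf (neg_binomial_pmf r p) k = ((r + real k - 1) gchoose k) * p powr r * (1 - p) ^ k"
proof -
  let ?f = "\<lambda>k. ((r + real k - 1) gchoose k) * p powr r * (1 - p) ^ k"
  have nonneg: "0 \<le> ?f k" for k
    using neg_binomial_coeff_pos[OF \<open>0 < r\<close>, of k] assms by simp
  have "(\<integral>\<^sup>+k. ennreal (?f k) \<partial>count_space UNIV) = 1"
    using neg_binomial_sums[OF assms(2,3), of r] nonneg
    by (simp add: nn_integral_count_space_nat suminf_ennreal2 sums_summable sums_unique[symmetric])
  then show ?thesis
    unfolding neg_binomial_pmf_def using nonneg by (subst pmf_embed_pmf) auto
qed

lemma conv_pmf_neg_binomial: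
  assumes "0 < r" "0 < s" "0 < p" "p < 1"
  shows "conv_pmf (neg_binomial_pmf r p) (neg_binomial_pmf s p) = neg_binomial_pmf (r + s) p"
proof (rule pmf_eqI)
  fix k
  have pmf_eq: "pmf (neg_binomial_pmf t p) i = ((- t) gchoose i) * (p - 1) ^ i * p powr t"
    if "0 < t" for t i
    using that assms by (simp add: pmf_neg_binomial_pmf neg_binomial_coeff_eq[symmetric] mult_ac)
  have "pmf (conv_pmf (neg_binomial_pmf r p) (neg_binomial_pmf s p)) k
      = (\<Sum>j\<le>k. (((- s) gchoose j) * (p - 1) ^ j * p powr s) *
                 (((- r) gchoose (k - j)) * (p - 1) ^ (k - j) * p powr r))"
    using assms by (simp only: pmf_conv_pmf pmf_eq)
  also have "\<dots> = (\<Sum>j\<le>k. ((- s) gchoose j) * ((- r) gchoose (k - j))) *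
                    (p - 1) ^ k * p powr (r + s)"
    unfolding sum_distrib_right
  proof (intro sum.cong refl)
    fix j assume "j \<in> {..k}"
    then have powers: "(p - 1) ^ j * (p - 1) ^ (k - j) = (p - 1) ^ k" by (simp flip: power_add)
    show "((- s) gchoose j) * (p - 1) ^ j * p powr s *
          (((- r) gchoose (k - j)) * (p - 1) ^ (k - j) * p powr r)
        = ((- s) gchoose j) * ((- r) gchoose (k - j)) * (p - 1) ^ k * p powr (r + s)"
      by (simp add: powr_add mult_ac flip: powers)
  qed
  also have "(\<Sum>j\<le>k. ((- s) gchoose j) * ((- r) gchoose (k - j))) = (- (r + s)) gchoose k"
    using gbinomial_Vandermonde[of "- s" "- r" k] by (simp add: atLeast0AtMost add.commute)
  also have "((- (r + s)) gchoose k) * (p - 1) ^ k * p powr (r + s)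
      = pmf (neg_binomial_pmf (r + s) p) k"
    using assms by (simp add: pmf_eq)
  finally show "pmf (conv_pmf (neg_binomial_pmf r p) (neg_binomial_pmf s p)) k
      = pmf (neg_binomial_pmf (r + s) p) k" .
qed

lemma pmf_neg_binomial_pmf_pos:
  assumes "0 < r" "0 < p" "p < 1"
  shows "0 < pmf (neg_binomial_pmf r p) k"
  using neg_binomial_coeff_pos[OF \<open>0 < r\<close>, of k] assms by (simp add: pmf_neg_binomial_pmf)

lemma conv_pmf_binomial:
  assumes "p \<in> {0..1}"
  shows "conv_pmf (binomial_pmf m p) (binomial_pmf n p) = binomial_pmf (m + n) p"
  using assms
  by (simp add: binomial_pmf_altdef replicate_pmf_distrib conv_pmf_def pair_pmf_def map_pmf_def
      bind_assoc_pmf bind_return_pmf)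

lemma wd_le_binomial_iff:
  assumes "0 < p" "p < 1"
  shows "wd_le (real_law (binomial_pmf m p)) (real_law (binomial_pmf n p)) \<longleftrightarrow> m \<le> n"
proof
  assume wd: "wd_le (real_law (binomial_pmf m p)) (real_law (binomial_pmf n p))"
  show "m \<le> n"
  proof (rule ccontr)
    assume "\<not> m \<le> n"
    define e where "e = real n + 1 / 2"
    have "1 \<le> levy_conc (real_law (binomial_pmf n p)) e"
      using assms by (intro one_le_levy_conc[of _ 0 n]) (auto simp: e_def)
    moreover have "levy_conc (real_law (binomial_pmf m p)) e < 1"
      using assms \<open>\<not> m \<le> n\<close> by (intro levy_conc_less_one[of 0 _ m]) (auto simp: e_def)
    moreover have "0 < e" by (simp add: e_def)
    ultimately show False using wd by (force simp: wd_le_def)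
  qed
next
  assume "m \<le> n"
  then have "binomial_pmf n p = conv_pmf (binomial_pmf m p) (binomial_pmf (n - m) p)"
    using conv_pmf_binomial[of p m "n - m"] assms by simp
  then show "wd_le (real_law (binomial_pmf m p)) (real_law (binomial_pmf n p))"
    using wd_le_conv_pmf by metis
qed

theorem mainTheorem10:
  shows "(\<forall>(la::real) (mu::real). 0 < la \<longrightarrow> 0 < mu \<longrightarrow>
            (wd_le (real_law (poisson_pmf la)) (real_law (poisson_pmf mu)) \<longleftrightarrow> la \<le> mu))
       \<and> (\<forall>(m::nat) (n::nat) (p::real). 0 < p \<longrightarrow> p < 1 \<longrightarrow>
            (wd_le (real_law (binomial_pmf m p)) (real_law (binomial_pmf n p)) \<longleftrightarrow> m \<le> n))
       \<and> (\<forall>(r::real) (s::real) (p::real). 0 < r \<longrightarrow> 0 < s \<longrightarrow> 0 < p \<longrightarrow> p < 1 \<longrightarrow>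
            (wd_le (real_law (neg_binomial_pmf r p)) (real_law (neg_binomial_pmf s p)) \<longleftrightarrow> r \<le> s))"
proof (intro conjI allI impI)
  fix la mu :: real assume "0 < la" "0 < mu"
  then show "wd_le (real_law (poisson_pmf la)) (real_law (poisson_pmf mu)) \<longleftrightarrow> la \<le> mu"
    by (intro wd_le_iff_of_conv_semigroup conv_pmf_poisson) simp_all
next
  fix m n :: nat and p :: real assume "0 < p" "p < 1"
  then show "wd_le (real_law (binomial_pmf m p)) (real_law (binomial_pmf n p)) \<longleftrightarrow> m \<le> n"
    by (rule wd_le_binomial_iff)
next
  fix r s p :: real assume "0 < r" "0 < s" "0 < p" "p < 1"
  then show "wd_le (real_law (neg_binomial_pmf r p)) (real_law (neg_binomial_pmf s p)) \<longleftrightarrow> r \<le> s"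
    by (intro wd_le_iff_of_conv_semigroup[where F = "\<lambda>r. neg_binomial_pmf r p"]
        conv_pmf_neg_binomial pmf_neg_binomial_pmf_pos)
qed

end
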